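(* In the setting described in the context, if the pricing kernel $\{\pi_t\}$ is asymptotically tail-Pareto with index $\lambda>0$, then for all $t\ge0$ the associated discount bond system satisfies $$0<\liminf_{T\to\infty}T^\lambda P_{tT}<\infty .$$
   Context: Let $(\Omega,\mathcal F,\mathbb P)$ be a probability space with a filtration $\{\mathcal F_t\}_{t\ge0}$ satisfying the usual conditions; (in)equalities between random variables hold a.s. A pricing kernel is an $\{\mathcal F_t\}$-adapted càdlàg semimartingale $\{\pi_t\}_{t\ge0}$ with (a) $\pi_t>0$, (b) $\mathbb E[\pi_t]<\infty$ for all $t\ge0$, (c) $\liminf_{t\to\infty}\mathbb E[\pi_t]=0$. The associated discount bond prices are $P_{tT}=\pi_t^{-1}\mathbb E[\pi_T\mid\mathcal F_t]$ for $0\le t<T$. A pricing kernel is asymptotically tail-Pareto with index $\lambda>0$ if (i) $\liminf_{t\to\infty}t^\lambda\pi_t>0$ and (ii) $\liminf_{t\to\infty}\mathbb E[t^\lambda\pi_t]<\infty$. Limits inferior over the continuum parameter $T$ of families of $\mathcal F_t$-measurable random variables are essential ones: $\liminf_{T\to\infty}A_T:=\operatorname{ess\,sup}_{x}\operatorname{ess\,inf}_{T\ge x}A_T$, with essential supremum/infimum taken among $\mathcal F_t$-measurable random variables. *)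

theory Defs
  imports "HOL-Probability.Probability"
begin

definition filtration :: "'a measure \<Rightarrow> (real \<Rightarrow> 'a measure) \<Rightarrow> bool" where
  "filtration M F \<longleftrightarrow>
     (\<forall>t\<ge>0. subalgebra M (F t)) \<and>
     (\<forall>s t. 0 \<le> s \<and> s \<le> t \<longrightarrow> sets (F s) \<subseteq> sets (F t))"

definition usual_conditions :: "'a measure \<Rightarrow> (real \<Rightarrow> 'a measure) \<Rightarrow> bool" where
  "usual_conditions M F \<longleftrightarrow> filtration M F \<and>
     (\<forall>t\<ge>0. sets (F t) = (\<Inter>s\<in>{t<..}. sets (F s))) \<and>
     (\<forall>N. N \<subseteq> space M \<and> (\<exists>N'\<in>null_sets M. N \<subseteq> N') \<longrightarrow> N \<in> sets (F 0))"

definition adapted :: "'a measure \<Rightarrow> (real \<Rightarrow> 'a measure) \<Rightarrow> (real \<Rightarrow> 'a \<Rightarrow> real) \<Rightarrow> bool" where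
  "adapted M F X \<longleftrightarrow> (\<forall>t\<ge>0. X t \<in> borel_measurable (F t))"

definition cadlag :: "'a measure \<Rightarrow> (real \<Rightarrow> 'a \<Rightarrow> real) \<Rightarrow> bool" where
  "cadlag M X \<longleftrightarrow> (\<forall>\<omega>\<in>space M. \<forall>t\<ge>0.
      continuous (at_right t) (\<lambda>s. X s \<omega>) \<and>
      (t > 0 \<longrightarrow> (\<exists>l. ((\<lambda>s. X s \<omega>) \<longlongrightarrow> l) (at_left t))))"

definition stopping_time_nn :: "'a measure \<Rightarrow> (real \<Rightarrow> 'a measure) \<Rightarrow> ('a \<Rightarrow> ereal) \<Rightarrow> bool" where
  "stopping_time_nn M F \<tau> \<longleftrightarrow> (\<forall>\<omega>\<in>space M. 0 \<le> \<tau> \<omega>) \<and>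
     (\<forall>t\<ge>0. {\<omega>\<in>space M. \<tau> \<omega> \<le> ereal t} \<in> sets (F t))"

definition stopped :: "(real \<Rightarrow> 'a \<Rightarrow> real) \<Rightarrow> ('a \<Rightarrow> ereal) \<Rightarrow> real \<Rightarrow> 'a \<Rightarrow> real" where
  "stopped X \<tau> t \<omega> = X (if \<tau> \<omega> \<le> ereal t then real_of_ereal (\<tau> \<omega>) else t) \<omega>"

definition martingale :: "'a measure \<Rightarrow> (real \<Rightarrow> 'a measure) \<Rightarrow> (real \<Rightarrow> 'a \<Rightarrow> real) \<Rightarrow> bool" where
  "martingale M F X \<longleftrightarrow> adapted M F X \<and> (\<forall>t\<ge>0. integrable M (X t)) \<and>
     (\<forall>s t. 0 \<le> s \<and> s \<le> t \<longrightarrow> (AE \<omega> in M. real_cond_exp M (F s) (X t) \<omega> = X s \<omega>))"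

definition local_martingale :: "'a measure \<Rightarrow> (real \<Rightarrow> 'a measure) \<Rightarrow> (real \<Rightarrow> 'a \<Rightarrow> real) \<Rightarrow> bool" where
  "local_martingale M F X \<longleftrightarrow> (\<exists>\<tau> :: nat \<Rightarrow> 'a \<Rightarrow> ereal.
     (\<forall>n. stopping_time_nn M F (\<tau> n)) \<and>
     (\<forall>\<omega>\<in>space M. mono (\<lambda>n. \<tau> n \<omega>)) \<and>
     (AE \<omega> in M. (\<lambda>n. \<tau> n \<omega>) \<longlonglongrightarrow> \<infinity>) \<and>
     (\<forall>n. martingale M F (stopped X (\<tau> n))))"

definition bounded_variation_on :: "(real \<Rightarrow> real) \<Rightarrow> real \<Rightarrow> real \<Rightarrow> bool" where
  "bounded_variation_on f a b \<longleftrightarrow> bdd_above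
     {(\<Sum>i<n. \<bar>f (s (Suc i)) - f (s i)\<bar>) | n s.
        (\<forall>i\<le>n. a \<le> s i \<and> s i \<le> b) \<and> (\<forall>i<n. s i \<le> s (Suc i))}"

definition semimartingale :: "'a measure \<Rightarrow> (real \<Rightarrow> 'a measure) \<Rightarrow> (real \<Rightarrow> 'a \<Rightarrow> real) \<Rightarrow> bool" where
  "semimartingale M F X \<longleftrightarrow> adapted M F X \<and> cadlag M X \<and>
     (\<exists>Mart A. local_martingale M F Mart \<and> cadlag M Mart \<and> (\<forall>\<omega>\<in>space M. Mart 0 \<omega> = 0) \<and>
        adapted M F A \<and> cadlag M A \<and> (\<forall>\<omega>\<in>space M. A 0 \<omega> = 0) \<and>
        (\<forall>\<omega>\<in>space M. \<forall>T\<ge>0. bounded_variation_on (\<lambda>s. A s \<omega>) 0 T) \<and>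
        (AE \<omega> in M. \<forall>t\<ge>0. X t \<omega> = X 0 \<omega> + Mart t \<omega> + A t \<omega>))"

definition pricing_kernel :: "'a measure \<Rightarrow> (real \<Rightarrow> 'a measure) \<Rightarrow> (real \<Rightarrow> 'a \<Rightarrow> real) \<Rightarrow> bool" where
  "pricing_kernel M F \<pi> \<longleftrightarrow> semimartingale M F \<pi> \<and>
     (\<forall>t\<ge>0. AE \<omega> in M. \<pi> t \<omega> > 0) \<and>
     (\<forall>t\<ge>0. integrable M (\<pi> t)) \<and>
     Liminf at_top (\<lambda>t. ereal (integral\<^sup>L M (\<pi> t))) = 0"

definition bond_price :: "'a measure \<Rightarrow> (real \<Rightarrow> 'a measure) \<Rightarrow> (real \<Rightarrow> 'a \<Rightarrow> real) \<Rightarrow> real \<Rightarrow> real \<Rightarrow> 'a \<Rightarrow> real" where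
  "bond_price M F \<pi> t T \<omega> = real_cond_exp M (F t) (\<pi> T) \<omega> / \<pi> t \<omega>"

definition asymptotically_tail_pareto ::
  "'a measure \<Rightarrow> (real \<Rightarrow> 'a \<Rightarrow> real) \<Rightarrow> real \<Rightarrow> bool" where
  "asymptotically_tail_pareto M \<pi> lam \<longleftrightarrow>
     (AE \<omega> in M. Liminf at_top (\<lambda>t. ereal (t powr lam * \<pi> t \<omega>)) > 0) \<and>
     Liminf at_top (\<lambda>t. ereal (integral\<^sup>L M (\<lambda>\<omega>. t powr lam * \<pi> t \<omega>))) < \<infinity>"

definition is_ess_inf :: "'a measure \<Rightarrow> 'a measure \<Rightarrow> 'i set \<Rightarrow> ('i \<Rightarrow> 'a \<Rightarrow> ereal) \<Rightarrow> ('a \<Rightarrow> ereal) \<Rightarrow> bool" where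
  "is_ess_inf M G I A Y \<longleftrightarrow> Y \<in> borel_measurable G \<and>
     (\<forall>i\<in>I. AE \<omega> in M. Y \<omega> \<le> A i \<omega>) \<and>
     (\<forall>Z\<in>borel_measurable G. (\<forall>i\<in>I. AE \<omega> in M. Z \<omega> \<le> A i \<omega>) \<longrightarrow> (AE \<omega> in M. Z \<omega> \<le> Y \<omega>))"

definition is_ess_sup :: "'a measure \<Rightarrow> 'a measure \<Rightarrow> 'i set \<Rightarrow> ('i \<Rightarrow> 'a \<Rightarrow> ereal) \<Rightarrow> ('a \<Rightarrow> ereal) \<Rightarrow> bool" where
  "is_ess_sup M G I A Y \<longleftrightarrow> Y \<in> borel_measurable G \<and>
     (\<forall>i\<in>I. AE \<omega> in M. A i \<omega> \<le> Y \<omega>) \<and>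
     (\<forall>Z\<in>borel_measurable G. (\<forall>i\<in>I. AE \<omega> in M. A i \<omega> \<le> Z \<omega>) \<longrightarrow> (AE \<omega> in M. Y \<omega> \<le> Z \<omega>))"

definition is_ess_liminf :: "'a measure \<Rightarrow> 'a measure \<Rightarrow> real set \<Rightarrow> (real \<Rightarrow> 'a \<Rightarrow> ereal) \<Rightarrow> ('a \<Rightarrow> ereal) \<Rightarrow> bool" where
  "is_ess_liminf M G D A L \<longleftrightarrow> (\<exists>Y :: real \<Rightarrow> 'a \<Rightarrow> ereal.
     (\<forall>x. is_ess_inf M G {T\<in>D. x \<le> T} A (Y x)) \<and> is_ess_sup M G UNIV Y L)"

end

theory Submission
  imports Defs
begin

text \<open>
  Essential infima of arbitrary families exist: after composing with a bounded strictly increasing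
  embedding of the extended reals, the integral of the pointwise infimum over a countable subfamily
  attains its least value, and a minimising countable subfamily realises the essential infimum.

  Positivity: the positive lower envelope \<open>W\<^sub>n = inf\<^sub>q\<^sub>\<in>\<^sub>\<rat>\<^sub>,\<^sub>q\<^sub>\<ge>\<^sub>n (q\<^sup>\<lambda> \<pi>\<^sub>q)\<^sup>+\<close> is an
  integrable random variable with \<open>W\<^sub>n \<le> T\<^sup>\<lambda> \<pi>\<^sub>T\<close> for all real \<open>T \<ge> n\<close> by right-continuity, so
  \<open>E[W\<^sub>n | F\<^sub>t] / \<pi>\<^sub>t \<le> T\<^sup>\<lambda> P\<^sub>t\<^sub>T\<close> for large \<open>T\<close> and therefore \<open>\<le> L\<close>.  Condition (i) gives
  \<open>W\<^sub>n > 0\<close> for some \<open>n\<close> almost surely, and then also \<open>E[W\<^sub>n | F\<^sub>t] > 0\<close>.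

  Finiteness: on an \<open>F\<^sub>t\<close>-event \<open>B\<close> where \<open>T\<^sup>\<lambda> P\<^sub>t\<^sub>T > K\<close>, integrating gives
  \<open>K E[\<pi>\<^sub>t 1\<^sub>B] \<le> T\<^sup>\<lambda> E[\<pi>\<^sub>T]\<close>, which condition (ii) bounds along a sequence \<open>T \<rightarrow> \<infinity>\<close>.  Letting
  \<open>K \<rightarrow> \<infinity>\<close> shows that \<open>{L = \<infinity>}\<close> has \<open>\<pi>\<^sub>t\<close>-weighted measure zero, hence probability zero.
\<close>

definition ereal_arctan :: "ereal \<Rightarrow> real" where
  "ereal_arctan x = arctan (real_of_ereal x) + (if x = \<infinity> then pi/2 else if x = -\<infinity> then -pi/2 else 0)"

lemma borel_measurable_ereal_arctan [measurable]: "ereal_arctan \<in> borel_measurable borel"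
  unfolding ereal_arctan_def by measurable

lemma abs_ereal_arctan_le: "\<bar>ereal_arctan x\<bar> \<le> pi/2"
  using arctan_bounded[of "real_of_ereal x"] by (cases x) (auto simp: ereal_arctan_def)

lemma strict_mono_ereal_arctan: "strict_mono ereal_arctan"
proof (rule strict_monoI)
  fix x y :: ereal assume "x < y"
  then show "ereal_arctan x < ereal_arctan y"
    using arctan_bounded by (cases x; cases y) (auto simp: ereal_arctan_def arctan_less_iff)
qed

lemma countable_subset_attains_Inf:
  fixes v :: "'i set \<Rightarrow> real"
  assumes antimono: "\<And>J J'. countable J' \<Longrightarrow> J' \<subseteq> I \<Longrightarrow> J \<subseteq> J' \<Longrightarrow> v J' \<le> v J"
    and bounded: "\<And>J. countable J \<Longrightarrow> J \<subseteq> I \<Longrightarrow> b \<le> v J"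
  obtains J where "countable J" "J \<subseteq> I" "\<And>J'. countable J' \<Longrightarrow> J' \<subseteq> I \<Longrightarrow> v J \<le> v J'"
proof -
  define C where "C = {J. countable J \<and> J \<subseteq> I}"
  define s where "s = (INF J\<in>C. v J)"
  have "C \<noteq> {}" by (auto simp: C_def)
  have bdd: "bdd_below (v ` C)" using bounded by (auto simp: C_def intro!: bdd_belowI[of _ b])
  have "\<exists>J\<in>C. v J < s + inverse (Suc n)" for n :: nat
    using cInf_lessD[of "v ` C" "s + inverse (Suc n)"] \<open>C \<noteq> {}\<close> by (auto simp: s_def)
  then obtain Jn where Jn: "\<And>n. Jn n \<in> C" "\<And>n. v (Jn n) < s + inverse (Suc n)" by metis
  define J where "J = (\<Union>n. Jn n)"
  have J: "countable J" "J \<subseteq> I" using Jn(1) by (auto simp: J_def C_def)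
  have v_J: "v J \<le> s"
  proof (rule field_le_epsilon)
    fix e :: real assume "0 < e"
    then obtain n where "inverse (Suc n) < e" using reals_Archimedean by blast
    moreover have "v J \<le> v (Jn n)" using J by (intro antimono) (auto simp: J_def)
    ultimately show "v J \<le> s + e" using Jn(2)[of n] by linarith
  qed
  have s_le: "s \<le> v J'" if "countable J'" "J' \<subseteq> I" for J'
    unfolding s_def using bdd that by (intro cINF_lower) (auto simp: C_def)
  show ?thesis using v_J s_le by (intro that[OF J]) (meson order.trans)
qed

lemma ess_inf_exists:
  fixes A :: "'i \<Rightarrow> 'a \<Rightarrow> ereal"
  assumes "finite_measure M" "subalgebra M G"
    and A: "\<And>i. i \<in> I \<Longrightarrow> A i \<in> borel_measurable G"
  shows "\<exists>Y. is_ess_inf M G I A Y"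
proof -
  interpret finite_measure M by fact
  define h where "h J \<omega> = (INF i\<in>J. A i \<omega>)" for J \<omega>
  have h_G: "h J \<in> borel_measurable G" if "countable J" "J \<subseteq> I" for J
    unfolding h_def using that A by (intro borel_measurable_INF) auto
  have int: "integrable M (\<lambda>\<omega>. ereal_arctan (h J \<omega>))" if "countable J" "J \<subseteq> I" for J
    using measurable_from_subalg[OF \<open>subalgebra M G\<close> h_G[OF that]] abs_ereal_arctan_le
    by (intro integrable_const_bound[of _ "pi/2"]) auto
  define v where "v J = (\<integral>\<omega>. ereal_arctan (h J \<omega>) \<partial>M)" for J
  have h_antimono: "h J' \<omega> \<le> h J \<omega>" if "J \<subseteq> J'" for J J' \<omega>
    unfolding h_def using that by (rule INF_superset_mono) simp
  have v_antimono: "v J' \<le> v J" if "countable J'" "J' \<subseteq> I" "J \<subseteq> J'" for J J'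
  proof -
    have "countable J" "J \<subseteq> I" using that countable_subset by auto
    then show ?thesis
      unfolding v_def using h_antimono[OF that(3)]
      by (intro integral_mono[OF int[OF that(1,2)] int])
         (simp_all add: strict_mono_less_eq[OF strict_mono_ereal_arctan])
  qed
  have v_lower: "- pi/2 * measure M (space M) \<le> v J" if "countable J" "J \<subseteq> I" for J
  proof -
    have "(\<integral>\<omega>. - pi/2 \<partial>M) \<le> v J"
      unfolding v_def
    proof (intro integral_mono int that)
      show "- pi/2 \<le> ereal_arctan (h J \<omega>)" for \<omega>
        using abs_ereal_arctan_le[of "h J \<omega>"] by linarith
    qed simp
    then show ?thesis by (simp add: mult.commute)
  qed
  obtain J where J: "countable J" "J \<subseteq> I"
    and v_min: "\<And>J'. countable J' \<Longrightarrow> J' \<subseteq> I \<Longrightarrow> v J \<le> v J'"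
  proof (rule countable_subset_attains_Inf[of I v "- pi/2 * measure M (space M)"])
    show "\<And>J J'. countable J' \<Longrightarrow> J' \<subseteq> I \<Longrightarrow> J \<subseteq> J' \<Longrightarrow> v J' \<le> v J" by (fact v_antimono)
    show "\<And>J. countable J \<Longrightarrow> J \<subseteq> I \<Longrightarrow> - pi/2 * measure M (space M) \<le> v J" by (fact v_lower)
  qed blast
  show ?thesis
  proof (intro exI[of _ "h J"], unfold is_ess_inf_def, intro conjI ballI impI)
    show "h J \<in> borel_measurable G" using h_G[OF J] .
  next
    fix i assume "i \<in> I"
    let ?J = "insert i J"
    have J': "countable ?J" "?J \<subseteq> I" using J \<open>i \<in> I\<close> by auto
    \<comment> \<open>adding \<open>i\<close> cannot lower the minimal value \<open>v J\<close>, so it does not lower \<open>h J\<close> either\<close>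
    have "(\<integral>\<omega>. ereal_arctan (h J \<omega>) - ereal_arctan (h ?J \<omega>) \<partial>M) = 0"
      using v_min[OF J'] v_antimono[OF J' subset_insertI] int[OF J] int[OF J'] by (simp add: v_def)
    then have "AE \<omega> in M. ereal_arctan (h J \<omega>) - ereal_arctan (h ?J \<omega>) = 0"
      using int[OF J] int[OF J'] h_antimono[of J ?J] strict_mono_less_eq[OF strict_mono_ereal_arctan]
      by (subst integral_nonneg_eq_0_iff_AE[symmetric]) auto
    then show "AE \<omega> in M. h J \<omega> \<le> A i \<omega>"
    proof eventually_elim
      case (elim \<omega>)
      then have "h J \<omega> = h ?J \<omega>" using strict_mono_eq[OF strict_mono_ereal_arctan] by simp
      also have "\<dots> = min (A i \<omega>) (h J \<omega>)" by (simp add: h_def inf_min)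
      finally show ?case by (metis min.cobounded1)
    qed
  next
    fix Z :: "'a \<Rightarrow> ereal"
    assume "\<forall>i\<in>I. AE \<omega> in M. Z \<omega> \<le> A i \<omega>"
    then have "AE \<omega> in M. \<forall>i\<in>J. Z \<omega> \<le> A i \<omega>" using J by (subst AE_ball_countable) auto
    then show "AE \<omega> in M. Z \<omega> \<le> h J \<omega>" by eventually_elim (simp add: h_def le_INF_iff)
  qed
qed

lemma is_ess_sup_uminus_iff:
  "is_ess_sup M G I A (\<lambda>\<omega>. - Y \<omega>) \<longleftrightarrow> is_ess_inf M G I (\<lambda>i \<omega>. - A i \<omega>) Y"
proof -
  have meas: "(\<lambda>\<omega>. - Z \<omega>) \<in> borel_measurable G \<longleftrightarrow> Z \<in> borel_measurable G" for Z :: "_ \<Rightarrow> ereal"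
    by (rule borel_measurable_uminus_eq_ereal)
  have all: "(\<forall>Z\<in>borel_measurable G. P Z) \<longleftrightarrow> (\<forall>Z\<in>borel_measurable G. P (\<lambda>\<omega>. - Z \<omega>))"
    for P :: "(_ \<Rightarrow> ereal) \<Rightarrow> bool"
  proof
    assume neg: "\<forall>Z\<in>borel_measurable G. P (\<lambda>\<omega>. - Z \<omega>)"
    have "P (\<lambda>\<omega>. - (- Z \<omega>))" if "Z \<in> borel_measurable G" for Z
      using bspec[OF neg, of "\<lambda>\<omega>. - Z \<omega>"] that meas by simp
    then show "\<forall>Z\<in>borel_measurable G. P Z" by simp
  qed (use meas in blast)
  have le_uminus: "a \<le> - b \<longleftrightarrow> b \<le> - a" for a b :: ereal
    by (metis ereal_minus_le_minus ereal_uminus_uminus)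
  show ?thesis
    unfolding is_ess_sup_def is_ess_inf_def meas
    by (subst all) (simp add: le_uminus)
qed

lemma ess_sup_exists:
  fixes A :: "'i \<Rightarrow> 'a \<Rightarrow> ereal"
  assumes "finite_measure M" "subalgebra M G" "\<And>i. i \<in> I \<Longrightarrow> A i \<in> borel_measurable G"
  shows "\<exists>Y. is_ess_sup M G I A Y"
  using ess_inf_exists[OF assms(1,2), of I "\<lambda>i \<omega>. - A i \<omega>"] assms(3)
  by (auto simp flip: is_ess_sup_uminus_iff)

lemma ess_liminf_exists:
  fixes A :: "real \<Rightarrow> 'a \<Rightarrow> ereal"
  assumes "finite_measure M" "subalgebra M G" "\<And>T. T \<in> D \<Longrightarrow> A T \<in> borel_measurable G"
  shows "\<exists>L. is_ess_liminf M G D A L"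
proof -
  have "\<forall>x. \<exists>Y. is_ess_inf M G {T\<in>D. x \<le> T} A Y"
    using assms(3) by (intro allI ess_inf_exists[OF assms(1,2)]) simp
  then obtain Y where Y: "\<And>x. is_ess_inf M G {T\<in>D. x \<le> T} A (Y x)" by metis
  then have "\<exists>L. is_ess_sup M G UNIV Y L"
    by (intro ess_sup_exists[OF assms(1,2)]) (simp add: is_ess_inf_def)
  then show ?thesis using Y unfolding is_ess_liminf_def by blast
qed

lemma is_ess_liminf_lower_bound:
  assumes "is_ess_liminf M G D A L" "Z \<in> borel_measurable G"
    and "\<And>T. T \<in> D \<Longrightarrow> x \<le> T \<Longrightarrow> AE \<omega> in M. Z \<omega> \<le> A T \<omega>"
  shows "AE \<omega> in M. Z \<omega> \<le> L \<omega>"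
proof -
  obtain Y where Y: "is_ess_inf M G {T\<in>D. x \<le> T} A (Y x)" and L: "is_ess_sup M G UNIV Y L"
    using assms(1) unfolding is_ess_liminf_def by blast
  have "AE \<omega> in M. Z \<omega> \<le> Y x \<omega>" using Y assms(2,3) unfolding is_ess_inf_def by auto
  moreover have "AE \<omega> in M. Y x \<omega> \<le> L \<omega>" using L unfolding is_ess_sup_def by auto
  ultimately show ?thesis by eventually_elim (rule order.trans)
qed

lemma is_ess_liminf_le_SUP_incseq:
  fixes A :: "real \<Rightarrow> 'a \<Rightarrow> ereal"
  assumes "is_ess_liminf M G D A L"
  obtains Y :: "nat \<Rightarrow> 'a \<Rightarrow> ereal"
  where "\<And>n. Y n \<in> borel_measurable G" "\<And>\<omega>. incseq (\<lambda>n. Y n \<omega>)"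
    and "\<And>n T. T \<in> D \<Longrightarrow> real n \<le> T \<Longrightarrow> AE \<omega> in M. Y n \<omega> \<le> A T \<omega>"
    and "AE \<omega> in M. L \<omega> \<le> (SUP n. Y n \<omega>)"
proof -
  obtain Y where Y: "\<And>x. is_ess_inf M G {T\<in>D. x \<le> T} A (Y x)" and L: "is_ess_sup M G UNIV Y L"
    using assms unfolding is_ess_liminf_def by blast
  have Y_G[measurable]: "Y x \<in> borel_measurable G" for x
    using Y unfolding is_ess_inf_def by blast
  have Y_le: "AE \<omega> in M. Y x \<omega> \<le> A T \<omega>" if "T \<in> D" "x \<le> T" for x T
    using Y[of x] that unfolding is_ess_inf_def by auto
  have Y_mono: "AE \<omega> in M. Y x \<omega> \<le> Y x' \<omega>" if "x \<le> x'" for x x'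
    using Y[of x'] Y_G[of x] Y_le[of _ x] that unfolding is_ess_inf_def by auto
  define Y' where "Y' n \<omega> = (SUP k\<in>{..n}. Y (real k) \<omega>)" for n \<omega>
  show ?thesis
  proof (rule that)
    show "Y' n \<in> borel_measurable G" for n unfolding Y'_def by measurable
    show "incseq (\<lambda>n. Y' n \<omega>)" for \<omega>
      unfolding Y'_def incseq_def by (auto intro: SUP_subset_mono)
    show "AE \<omega> in M. Y' n \<omega> \<le> A T \<omega>" if "T \<in> D" "real n \<le> T" for n T
    proof -
      have "AE \<omega> in M. \<forall>k\<in>{..n}. Y (real k) \<omega> \<le> A T \<omega>"
        using that by (subst AE_ball_countable) (auto intro!: Y_le)
      then show ?thesis unfolding Y'_def by eventually_elim (rule SUP_least, blast)
    qed
    have L_least: "AE \<omega> in M. L \<omega> \<le> Z \<omega>"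
      if "Z \<in> borel_measurable G" "\<And>x. AE \<omega> in M. Y x \<omega> \<le> Z \<omega>" for Z
      using L that unfolding is_ess_sup_def by blast
    show "AE \<omega> in M. L \<omega> \<le> (SUP n. Y' n \<omega>)"
    proof (rule L_least)
      show "(\<lambda>\<omega>. SUP n. Y' n \<omega>) \<in> borel_measurable G" unfolding Y'_def by measurable
      fix x :: real
      have upper: "Y (real (nat \<lceil>x\<rceil>)) \<omega> \<le> (SUP n. Y' n \<omega>)" for \<omega>
        unfolding Y'_def by (intro SUP_upper2[of "nat \<lceil>x\<rceil>"] SUP_upper) auto
      have "AE \<omega> in M. Y x \<omega> \<le> Y (real (nat \<lceil>x\<rceil>)) \<omega>" by (rule Y_mono) linarith
      then show "AE \<omega> in M. Y x \<omega> \<le> (SUP n. Y' n \<omega>)"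
        by eventually_elim (rule order.trans[OF _ upper])
    qed
  qed
qed

lemma Liminf_less_PInf_imp_frequently_bounded:
  fixes g :: "real \<Rightarrow> real"
  assumes "Liminf at_top (\<lambda>x. ereal (g x)) < \<infinity>"
  shows "\<exists>c. \<forall>N. \<exists>x\<ge>N. g x \<le> c"
proof -
  obtain c :: real where c: "Liminf at_top (\<lambda>x. ereal (g x)) < ereal c"
    using ereal_dense2[OF assms] by blast
  have "\<exists>x\<ge>N. g x \<le> c" for N
  proof (rule ccontr)
    assume "\<not> (\<exists>x\<ge>N. g x \<le> c)"
    then have "\<forall>x\<ge>N. c \<le> g x" by auto
    then have "eventually (\<lambda>x. ereal c \<le> ereal (g x)) at_top"
      unfolding eventually_at_top_linorder by auto
    then have "ereal c \<le> Liminf at_top (\<lambda>x. ereal (g x))" by (rule Liminf_bounded)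
    with c show False by simp
  qed
  then show ?thesis by blast
qed

text \<open>Restricting to rational times keeps the infimum measurable, and the positive part keeps the
  set bounded below, so that the conditionally complete \<open>INF\<close> is meaningful.\<close>

definition rat_tail_inf :: "real \<Rightarrow> (real \<Rightarrow> real) \<Rightarrow> real" where
  "rat_tail_inf a g = (INF q\<in>{q\<in>\<rat>. a \<le> q}. max 0 (g q))"

lemma rat_tail_nonempty: "{q\<in>\<rat>. a \<le> q} \<noteq> {}" for a :: real
  using le_of_int_ceiling[of a] Rats_of_int by blast

lemma rat_tail_inf_ge:
  assumes "0 \<le> c" "\<And>q. q \<in> \<rat> \<Longrightarrow> a \<le> q \<Longrightarrow> c \<le> g q"
  shows "c \<le> rat_tail_inf a g"
  unfolding rat_tail_inf_def
proof (rule cINF_greatest[OF rat_tail_nonempty])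
  show "c \<le> max 0 (g q)" if "q \<in> {q\<in>\<rat>. a \<le> q}" for q
    using assms(2)[of q] that by simp
qed

lemma rat_tail_inf_nonneg: "0 \<le> rat_tail_inf a g"
  unfolding rat_tail_inf_def by (rule cINF_greatest[OF rat_tail_nonempty]) simp

lemma rat_tail_inf_le: "q \<in> \<rat> \<Longrightarrow> a \<le> q \<Longrightarrow> rat_tail_inf a g \<le> max 0 (g q)"
  unfolding rat_tail_inf_def by (rule cINF_lower) (simp_all add: bdd_belowI2[of _ 0])

lemma rat_tail_inf_le_right_continuous:
  assumes "continuous (at_right T) g" "a \<le> T"
  shows "rat_tail_inf a g \<le> max 0 (g T)"
proof (rule ccontr)
  assume "\<not> ?thesis"
  then have less: "max 0 (g T) < rat_tail_inf a g" by (simp only: not_le)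
  have "((\<lambda>s. max 0 (g s)) \<longlongrightarrow> max 0 (g T)) (at_right T)"
    using assms(1) by (intro tendsto_max tendsto_const) (simp add: continuous_within)
  from order_tendstoD(2)[OF this less] obtain b
    where "T < b" and b: "\<And>s. T < s \<Longrightarrow> s < b \<Longrightarrow> max 0 (g s) < rat_tail_inf a g"
    unfolding eventually_at_right_field by blast
  obtain q where q: "q \<in> \<rat>" "T < q" "q < b" using Rats_dense_in_real[OF \<open>T < b\<close>] by blast
  have "rat_tail_inf a g \<le> max 0 (g q)" using q assms(2) by (intro rat_tail_inf_le) simp_all
  with b[OF q(2,3)] show False by linarith
qed

lemma borel_measurable_rat_tail_inf:
  assumes "\<And>q. q \<in> \<rat> \<Longrightarrow> a \<le> q \<Longrightarrow> (\<lambda>\<omega>. f q \<omega>) \<in> borel_measurable M"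
  shows "(\<lambda>\<omega>. rat_tail_inf a (\<lambda>s. f s \<omega>)) \<in> borel_measurable M"
  unfolding rat_tail_inf_def
proof (rule borel_measurable_cINF_real)
  show "countable {q\<in>\<rat>. a \<le> q}" by (rule countable_subset[OF _ countable_rat]) auto
  show "(\<lambda>\<omega>. max 0 (f q \<omega>)) \<in> borel_measurable M" if "q \<in> {q\<in>\<rat>. a \<le> q}" for q
    using assms[of q] that by (intro borel_measurable_max borel_measurable_const) auto
qed

lemma rat_tail_inf_pos_if_Liminf_pos:
  assumes "0 < Liminf at_top (\<lambda>s. ereal (g s))"
  shows "\<exists>n::nat. 0 < rat_tail_inf (real n) g"
proof -
  obtain c where "0 < ereal c" and c: "ereal c < Liminf at_top (\<lambda>s. ereal (g s))"
    using ereal_dense2[OF assms] by blast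
  then have "0 < c" by simp
  from less_LiminfD[OF c] obtain N where "\<And>s. N \<le> s \<Longrightarrow> c < g s"
    unfolding eventually_at_top_linorder by auto
  moreover obtain n :: nat where "N \<le> real n" using real_arch_simple by blast
  ultimately have "c \<le> rat_tail_inf (real n) g"
    using \<open>0 < c\<close> by (intro rat_tail_inf_ge) (auto intro: less_imp_le)
  with \<open>0 < c\<close> show ?thesis by (intro exI[of _ n]) simp
qed

lemma (in sigma_finite_subalgebra) AE_real_cond_exp_nonpos_imp_zero:
  assumes f: "integrable M f" and nonneg: "AE x in M. 0 \<le> f x"
  shows "AE x in M. real_cond_exp M F f x \<le> 0 \<longrightarrow> f x = 0"
proof -
  define C where "C = {x \<in> space M. real_cond_exp M F f x \<le> 0}"
  have "space F = space M" using subalg by (simp add: subalgebra_def)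
  have "{x \<in> space F. real_cond_exp M F f x \<le> 0} \<in> sets F"
    by (rule borel_measurable_iff_le[THEN iffD1, rule_format, OF borel_measurable_cond_exp])
  then have C_F: "C \<in> sets F" using \<open>space F = space M\<close> by (simp add: C_def)
  then have C_M: "C \<in> sets M" using subalg by (auto simp: subalgebra_def)
  have int_Cf: "integrable M (\<lambda>x. indicator C x * f x)"
    using integrable_mult_indicator[OF C_M f] by simp
  have "(\<integral>x. indicator C x * f x \<partial>M) = (\<integral>x\<in>C. real_cond_exp M F f x \<partial>M)"
    using real_cond_exp_intA[OF f C_F] by (simp add: set_lebesgue_integral_def)
  also have "\<dots> \<le> (\<integral>x. 0 \<partial>M)"
    unfolding set_lebesgue_integral_def
  proof (rule integral_mono)
    show "integrable M (\<lambda>x. indicator C x *\<^sub>R real_cond_exp M F f x)"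
      using integrable_mult_indicator[OF C_M real_cond_exp_int(1)[OF f]] by simp
  qed (simp_all add: C_def indicator_def)
  finally have "(\<integral>x. indicator C x * f x \<partial>M) \<le> 0" by simp
  moreover have "0 \<le> (\<integral>x. indicator C x * f x \<partial>M)"
    using nonneg by (intro integral_nonneg_AE) (auto elim: eventually_mono split: split_indicator)
  ultimately have "(\<integral>x. indicator C x * f x \<partial>M) = 0" by linarith
  then have "AE x in M. indicator C x * f x = 0"
    using nonneg by (subst integral_nonneg_eq_0_iff_AE[symmetric, OF int_Cf]) (auto elim: eventually_mono split: split_indicator)
  then show ?thesis
    using AE_space by eventually_elim (auto simp: C_def split: split_indicator)
qed

lemma (in sigma_finite_subalgebra) AE_ex_real_cond_exp_pos:
  fixes f :: "'i::countable \<Rightarrow> 'a \<Rightarrow> real"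
  assumes "\<And>i. integrable M (f i)" "\<And>i. AE x in M. 0 \<le> f i x" "AE x in M. \<exists>i. 0 < f i x"
  shows "AE x in M. \<exists>i. 0 < real_cond_exp M F (f i) x"
proof -
  have "AE x in M. \<forall>i. real_cond_exp M F (f i) x \<le> 0 \<longrightarrow> f i x = 0"
    using assms(1,2) by (subst AE_all_countable) (blast intro: AE_real_cond_exp_nonpos_imp_zero)
  with assms(3) show ?thesis
  proof eventually_elim
    case (elim x)
    then obtain i where "0 < f i x" by blast
    with elim have "\<not> real_cond_exp M F (f i) x \<le> 0" by auto
    then show ?case by (auto simp: not_le)
  qed
qed

lemma AE_less_PInf_of_tail_integral_bound:
  fixes U :: "'a \<Rightarrow> ereal" and H :: "'a \<Rightarrow> real"
  assumes U[measurable]: "U \<in> borel_measurable M" and H: "integrable M H" "AE x in M. 0 < H x"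
    and bound: "\<And>K::nat. real K * (\<integral>x\<in>{x\<in>space M. real K < U x}. H x \<partial>M) \<le> c"
  shows "AE x in M. U x < \<infinity>"
proof -
  define S where "S = {x\<in>space M. U x = \<infinity>}"
  have S[measurable]: "S \<in> sets M" unfolding S_def by measurable
  define p where "p = (\<integral>x\<in>S. H x \<partial>M)"
  have Kp: "real K * p \<le> c" for K :: nat
  proof -
    have "p \<le> (\<integral>x\<in>{x\<in>space M. real K < U x}. H x \<partial>M)"
      unfolding p_def S_def set_lebesgue_integral_def using H
      by (intro integral_mono_AE integrable_mult_indicator[unfolded scaleR_conv_of_real])
         (auto elim: eventually_mono split: split_indicator)
    then show ?thesis using bound[of K] by (meson mult_left_mono of_nat_0_le_iff order.trans)
  qed
  have "0 \<le> p"
    unfolding p_def set_lebesgue_integral_def using H(2)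
    by (intro integral_nonneg_AE) (auto elim: eventually_mono split: split_indicator)
  have "p = 0"
  proof (rule ccontr)
    assume "p \<noteq> 0"
    with \<open>0 \<le> p\<close> have "0 < p" by simp
    obtain K :: nat where "c / p < real K" using reals_Archimedean2 by blast
    with \<open>0 < p\<close> Kp[of K] show False by (simp add: field_simps)
  qed
  moreover have "integrable M (\<lambda>x. indicator S x * H x)"
    using integrable_mult_indicator[OF S H(1)] by simp
  ultimately have "AE x in M. indicator S x * H x = 0"
    unfolding p_def set_lebesgue_integral_def using H(2)
    by (subst integral_nonneg_eq_0_iff_AE[symmetric]) (auto elim: eventually_mono split: split_indicator)
  then show ?thesis
    using H(2) AE_space by eventually_elim (auto simp: S_def less_top[symmetric] split: split_indicator)
qed

lemma set_integral_SUP_tail_le: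
  fixes Y :: "nat \<Rightarrow> 'a \<Rightarrow> ereal" and H :: "'a \<Rightarrow> real" and K c :: real
  assumes Y: "\<And>n. Y n \<in> borel_measurable M" "\<And>x. incseq (\<lambda>n. Y n x)" and H: "integrable M H"
    and bound: "\<And>n. K * (\<integral>x\<in>{x\<in>space M. K < Y n x}. H x \<partial>M) \<le> c"
  shows "K * (\<integral>x\<in>{x\<in>space M. K < (SUP n. Y n x)}. H x \<partial>M) \<le> c"
proof -
  define B where "B n = {x\<in>space M. K < Y n x}" for n
  have B_M: "B n \<in> sets M" for n
    unfolding B_def using borel_measurable_const Y(1) by (rule borel_measurable_less)
  have B_inc: "incseq B"
    unfolding incseq_def
  proof (intro allI impI subsetI)
    fix m n x assume "m \<le> n" "x \<in> B m"
    with incseqD[OF Y(2) \<open>m \<le> n\<close>, of x] show "x \<in> B n"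
      unfolding B_def by (auto intro: less_le_trans)
  qed
  have B_Un: "(\<Union>n. B n) = {x\<in>space M. K < (SUP n. Y n x)}"
    unfolding B_def less_SUP_iff by blast
  have "(\<Union>n. B n) \<in> sets M" using B_M by blast
  then have "set_integrable M (\<Union>n. B n) H"
    unfolding set_integrable_def using H by (rule integrable_mult_indicator)
  from set_integral_cont_up[OF B_M B_inc this]
  have "(\<lambda>n. \<integral>x\<in>B n. H x \<partial>M) \<longlonglongrightarrow> (\<integral>x\<in>{x\<in>space M. K < (SUP n. Y n x)}. H x \<partial>M)"
    by (simp only: B_Un)
  then have "(\<lambda>n. K * (\<integral>x\<in>B n. H x \<partial>M)) \<longlonglongrightarrow> K * (\<integral>x\<in>{x\<in>space M. K < (SUP n. Y n x)}. H x \<partial>M)"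
    by (rule tendsto_mult_left)
  then show ?thesis
    by (rule LIMSEQ_le_const2) (use bound in \<open>auto simp: B_def\<close>)
qed

lemma (in sigma_finite_subalgebra) set_integral_le_if_AE_le_real_cond_exp:
  assumes "integrable M f" "integrable M g" "B \<in> sets F"
    and "AE x in M. x \<in> B \<longrightarrow> f x \<le> real_cond_exp M F g x"
  shows "(\<integral>x\<in>B. f x \<partial>M) \<le> (\<integral>x\<in>B. g x \<partial>M)"
proof -
  have "B \<in> sets M" using assms(3) subalg by (auto simp: subalgebra_def)
  then have "(\<integral>x\<in>B. f x \<partial>M) \<le> (\<integral>x\<in>B. real_cond_exp M F g x \<partial>M)"
    using assms(4) integrable_mult_indicator[OF \<open>B \<in> sets M\<close> assms(1)]
      integrable_mult_indicator[OF \<open>B \<in> sets M\<close> real_cond_exp_int(1)[OF assms(2)]]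
    by (intro set_integral_mono_AE) (auto simp: set_integrable_def)
  also have "\<dots> = (\<integral>x\<in>B. g x \<partial>M)" using real_cond_exp_intA[OF assms(2,3)] by simp
  finally show ?thesis .
qed

locale bond_market = prob_space M for M :: "'a measure" +
  fixes F :: "real \<Rightarrow> 'a measure" and \<pi> :: "real \<Rightarrow> 'a \<Rightarrow> real"
  assumes filtration: "filtration M F" and pricing_kernel: "pricing_kernel M F \<pi>"
begin

lemma finite_measure_subalgebra_F: "0 \<le> s \<Longrightarrow> finite_measure_subalgebra M (F s)"
  by unfold_locales (use filtration in \<open>simp add: filtration_def\<close>)

lemma kernel_measurable_F: "0 \<le> s \<Longrightarrow> \<pi> s \<in> borel_measurable (F s)"
  using pricing_kernel by (simp add: pricing_kernel_def semimartingale_def adapted_def)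

lemma kernel_measurable: "0 \<le> s \<Longrightarrow> \<pi> s \<in> borel_measurable M"
  using filtration kernel_measurable_F by (auto simp: filtration_def intro: measurable_from_subalg)

lemma kernel_integrable: "0 \<le> s \<Longrightarrow> integrable M (\<pi> s)"
  using pricing_kernel by (simp add: pricing_kernel_def)

lemma kernel_pos: "0 \<le> s \<Longrightarrow> AE \<omega> in M. 0 < \<pi> s \<omega>"
  using pricing_kernel by (simp add: pricing_kernel_def)

lemma kernel_right_continuous: "\<omega> \<in> space M \<Longrightarrow> 0 \<le> s \<Longrightarrow> continuous (at_right s) (\<lambda>s. \<pi> s \<omega>)"
  using pricing_kernel by (simp add: pricing_kernel_def semimartingale_def cadlag_def)

lemma bond_price_measurable: "0 \<le> t \<Longrightarrow> bond_price M F \<pi> t T \<in> borel_measurable (F t)"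
  unfolding bond_price_def by (intro borel_measurable_divide borel_measurable_cond_exp kernel_measurable_F)

lemma scaled_bond_price_ge:
  assumes "0 \<le> t" "0 \<le> T" "integrable M X" "AE \<omega> in M. X \<omega> \<le> c * \<pi> T \<omega>"
  shows "AE \<omega> in M. real_cond_exp M (F t) X \<omega> / \<pi> t \<omega> \<le> c * bond_price M F \<pi> t T \<omega>"
proof -
  interpret finite_measure_subalgebra M "F t" using assms(1) by (rule finite_measure_subalgebra_F)
  have "AE \<omega> in M. real_cond_exp M (F t) X \<omega> \<le> real_cond_exp M (F t) (\<lambda>\<omega>. c * \<pi> T \<omega>) \<omega>"
    using assms(3,4) kernel_integrable[OF assms(2)] by (intro real_cond_exp_mono) auto
  moreover have "AE \<omega> in M. real_cond_exp M (F t) (\<lambda>\<omega>. c * \<pi> T \<omega>) \<omega> = c * real_cond_exp M (F t) (\<pi> T) \<omega>"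
    using kernel_integrable[OF assms(2)] by (rule real_cond_exp_cmult)
  ultimately show ?thesis
    using kernel_pos[OF assms(1)]
    by eventually_elim (simp add: bond_price_def divide_right_mono)
qed


lemma kernel_set_integral_le_if_scaled_bond_price_gt:
  assumes t: "0 \<le> t" "t \<le> T" and B: "B \<in> sets (F t)"
    and gt: "AE \<omega> in M. \<omega> \<in> B \<longrightarrow> K < T powr lam * bond_price M F \<pi> t T \<omega>"
  shows "K * (\<integral>\<omega>\<in>B. \<pi> t \<omega> \<partial>M) \<le> (\<integral>\<omega>. T powr lam * \<pi> T \<omega> \<partial>M)"
proof -
  interpret Ft: finite_measure_subalgebra M "F t" using t(1) by (rule finite_measure_subalgebra_F)
  have "0 \<le> T" using t by linarith
  have int_T: "integrable M (\<lambda>\<omega>. T powr lam * \<pi> T \<omega>)"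
    using kernel_integrable[OF \<open>0 \<le> T\<close>] by simp
  have "AE \<omega> in M. \<omega> \<in> B \<longrightarrow> K * \<pi> t \<omega> \<le> real_cond_exp M (F t) (\<lambda>\<omega>. T powr lam * \<pi> T \<omega>) \<omega>"
    using gt Ft.real_cond_exp_cmult[OF kernel_integrable[OF \<open>0 \<le> T\<close>], of "T powr lam"] kernel_pos[OF t(1)]
    by eventually_elim (auto simp: bond_price_def field_simps)
  then have "(\<integral>\<omega>\<in>B. K * \<pi> t \<omega> \<partial>M) \<le> (\<integral>\<omega>\<in>B. T powr lam * \<pi> T \<omega> \<partial>M)"
    using kernel_integrable[OF t(1)] int_T B by (intro Ft.set_integral_le_if_AE_le_real_cond_exp) simp_all
  also have "\<dots> \<le> (\<integral>\<omega>. T powr lam * \<pi> T \<omega> \<partial>M)"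
    unfolding set_lebesgue_integral_def
  proof (rule integral_mono_AE)
    have "B \<in> sets M" using B Ft.subalg by (auto simp: subalgebra_def)
    then show "integrable M (\<lambda>\<omega>. indicator B \<omega> *\<^sub>R (T powr lam * \<pi> T \<omega>))"
      using integrable_mult_indicator[OF _ int_T] by simp
    show "AE \<omega> in M. indicator B \<omega> *\<^sub>R (T powr lam * \<pi> T \<omega>) \<le> T powr lam * \<pi> T \<omega>"
      using kernel_pos[OF \<open>0 \<le> T\<close>] by eventually_elim (simp add: indicator_def)
  qed (rule int_T)
  finally show ?thesis by simp
qed

definition kernel_envelope :: "real \<Rightarrow> nat \<Rightarrow> 'a \<Rightarrow> real" where
  "kernel_envelope lam n \<omega> = rat_tail_inf (real n) (\<lambda>s. s powr lam * \<pi> s \<omega>)"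

lemma kernel_envelope_nonneg: "0 \<le> kernel_envelope lam n \<omega>"
  by (simp add: kernel_envelope_def rat_tail_inf_nonneg)

lemma integrable_kernel_envelope: "integrable M (kernel_envelope lam n)"
proof (rule Bochner_Integration.integrable_bound)
  show "kernel_envelope lam n \<in> borel_measurable M"
    unfolding kernel_envelope_def[abs_def] using kernel_measurable
    by (intro borel_measurable_rat_tail_inf borel_measurable_times borel_measurable_const) auto
  show "integrable M (\<lambda>\<omega>. real n powr lam * \<pi> (real n) \<omega>)" using kernel_integrable by simp
  show "AE \<omega> in M. norm (kernel_envelope lam n \<omega>) \<le> norm (real n powr lam * \<pi> (real n) \<omega>)"
  proof (rule AE_I2)
    fix \<omega>
    have "\<bar>kernel_envelope lam n \<omega>\<bar> \<le> max 0 (real n powr lam * \<pi> (real n) \<omega>)"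
      unfolding kernel_envelope_def using rat_tail_inf_nonneg rat_tail_inf_le[OF Rats_of_nat order.refl] by simp
    also have "\<dots> \<le> \<bar>real n powr lam * \<pi> (real n) \<omega>\<bar>" by (rule max.boundedI) simp_all
    finally show "norm (kernel_envelope lam n \<omega>) \<le> norm (real n powr lam * \<pi> (real n) \<omega>)" by simp
  qed
qed

lemma AE_kernel_envelope_le:
  assumes "0 < T" "real n \<le> T"
  shows "AE \<omega> in M. kernel_envelope lam n \<omega> \<le> T powr lam * \<pi> T \<omega>"
  using kernel_pos[OF less_imp_le[OF assms(1)]] AE_space
proof eventually_elim
  case (elim \<omega>)
  have "((\<lambda>s. \<pi> s \<omega>) \<longlongrightarrow> \<pi> T \<omega>) (at_right T)"
    using kernel_right_continuous[OF elim(2)] assms(1) by (simp add: continuous_within)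
  then have "continuous (at_right T) (\<lambda>s. s powr lam * \<pi> s \<omega>)"
    unfolding continuous_within using assms(1)
    by (intro tendsto_mult tendsto_powr tendsto_ident_at tendsto_const) auto
  then have "kernel_envelope lam n \<omega> \<le> max 0 (T powr lam * \<pi> T \<omega>)"
    unfolding kernel_envelope_def using assms(2) by (rule rat_tail_inf_le_right_continuous)
  then show ?case using elim(1) by simp
qed

lemma AE_ex_kernel_envelope_pos:
  assumes "AE \<omega> in M. 0 < Liminf at_top (\<lambda>s. ereal (s powr lam * \<pi> s \<omega>))"
  shows "AE \<omega> in M. \<exists>n. 0 < kernel_envelope lam n \<omega>"
  using assms by eventually_elim (simp add: kernel_envelope_def rat_tail_inf_pos_if_Liminf_pos)

lemma ess_liminf_scaled_bond_price_pos:
  assumes tail: "AE \<omega> in M. 0 < Liminf at_top (\<lambda>s. ereal (s powr lam * \<pi> s \<omega>))"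
    and t: "0 \<le> t"
    and L: "is_ess_liminf M (F t) {t<..} (\<lambda>T \<omega>. ereal (T powr lam * bond_price M F \<pi> t T \<omega>)) L"
  shows "AE \<omega> in M. 0 < L \<omega>"
proof -
  interpret Ft: finite_measure_subalgebra M "F t" using t by (rule finite_measure_subalgebra_F)
  let ?V = "\<lambda>n \<omega>. real_cond_exp M (F t) (kernel_envelope lam n) \<omega> / \<pi> t \<omega>"
  have "AE \<omega> in M. \<forall>n. ereal (?V n \<omega>) \<le> L \<omega>"
  proof (subst AE_all_countable, intro allI is_ess_liminf_lower_bound[OF L])
    show "(\<lambda>\<omega>. ereal (?V n \<omega>)) \<in> borel_measurable (F t)" for n
      using kernel_measurable_F[OF t] by measurable
    show "AE \<omega> in M. ereal (?V n \<omega>) \<le> ereal (T powr lam * bond_price M F \<pi> t T \<omega>)"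
      if "T \<in> {t<..}" "real n \<le> T" for n T
      using that t scaled_bond_price_ge[OF t _ integrable_kernel_envelope AE_kernel_envelope_le]
      by (auto elim: eventually_mono)
  qed
  moreover have "AE \<omega> in M. \<exists>n. 0 < real_cond_exp M (F t) (kernel_envelope lam n) \<omega>"
    using integrable_kernel_envelope kernel_envelope_nonneg AE_ex_kernel_envelope_pos[OF tail]
    by (intro Ft.AE_ex_real_cond_exp_pos) auto
  ultimately show ?thesis
    using kernel_pos[OF t]
  proof eventually_elim
    case (elim \<omega>)
    then obtain n where "0 < real_cond_exp M (F t) (kernel_envelope lam n) \<omega>" by blast
    with elim(3) have "0 < ereal (?V n \<omega>)" by simp
    also have "\<dots> \<le> L \<omega>" using elim(1) by blast
    finally show ?case .
  qed
qed

lemma ess_liminf_scaled_bond_price_finite: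
  assumes tail: "Liminf at_top (\<lambda>s. ereal (\<integral>\<omega>. s powr lam * \<pi> s \<omega> \<partial>M)) < \<infinity>"
    and t: "0 \<le> t"
    and L: "is_ess_liminf M (F t) {t<..} (\<lambda>T \<omega>. ereal (T powr lam * bond_price M F \<pi> t T \<omega>)) L"
  shows "AE \<omega> in M. L \<omega> < \<infinity>"
proof -
  interpret Ft: finite_measure_subalgebra M "F t" using t by (rule finite_measure_subalgebra_F)
  obtain c where c: "\<forall>N. \<exists>T\<ge>N. (\<integral>\<omega>. T powr lam * \<pi> T \<omega> \<partial>M) \<le> c"
    using Liminf_less_PInf_imp_frequently_bounded[OF tail] by blast
  obtain Y where Y_G: "\<And>n. Y n \<in> borel_measurable (F t)" and Y_inc: "\<And>\<omega>. incseq (\<lambda>n. Y n \<omega>)"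
    and Y_le: "\<And>n T. T \<in> {t<..} \<Longrightarrow> real n \<le> T
      \<Longrightarrow> AE \<omega> in M. Y n \<omega> \<le> ereal (T powr lam * bond_price M F \<pi> t T \<omega>)"
    and L_le: "AE \<omega> in M. L \<omega> \<le> (SUP n. Y n \<omega>)"
    using is_ess_liminf_le_SUP_incseq[OF L] by blast
  have Y_M: "Y n \<in> borel_measurable M" for n using measurable_from_subalg[OF Ft.subalg Y_G] .
  have "AE \<omega> in M. (SUP n. Y n \<omega>) < \<infinity>"
  proof (rule AE_less_PInf_of_tail_integral_bound)
    show "(\<lambda>\<omega>. SUP n. Y n \<omega>) \<in> borel_measurable M" using Y_M by (intro borel_measurable_SUP) simp_all
    show "integrable M (\<pi> t)" "AE \<omega> in M. 0 < \<pi> t \<omega>" using t by (rule kernel_integrable, rule kernel_pos)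
    fix K :: nat
    show "real K * (\<integral>\<omega>\<in>{\<omega>\<in>space M. real K < (SUP n. Y n \<omega>)}. \<pi> t \<omega> \<partial>M) \<le> c"
    proof (rule set_integral_SUP_tail_le[OF Y_M Y_inc kernel_integrable[OF t]])
      fix n
      obtain T where T: "max (real n) (t + 1) \<le> T" "(\<integral>\<omega>. T powr lam * \<pi> T \<omega> \<partial>M) \<le> c"
        using c by blast
      have "space (F t) = space M" using Ft.subalg by (simp add: subalgebra_def)
      moreover have "{\<omega> \<in> space (F t). real K < Y n \<omega>} \<in> sets (F t)"
        using borel_measurable_const Y_G by (rule borel_measurable_less)
      ultimately have B: "{\<omega> \<in> space M. real K < Y n \<omega>} \<in> sets (F t)" by simp
      have "AE \<omega> in M. \<omega> \<in> {\<omega> \<in> space M. real K < Y n \<omega>} \<longrightarrow> real K < T powr lam * bond_price M F \<pi> t T \<omega>"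
        using Y_le[of T n] T(1) by (auto elim!: eventually_mono dest: less_le_trans)
      then have "real K * (\<integral>\<omega>\<in>{\<omega> \<in> space M. real K < Y n \<omega>}. \<pi> t \<omega> \<partial>M) \<le> (\<integral>\<omega>. T powr lam * \<pi> T \<omega> \<partial>M)"
        using T(1) t by (intro kernel_set_integral_le_if_scaled_bond_price_gt[OF t _ B]) auto
      with T(2) show "real K * (\<integral>\<omega>\<in>{\<omega> \<in> space M. real K < Y n \<omega>}. \<pi> t \<omega> \<partial>M) \<le> c" by linarith
    qed
  qed
  with L_le show ?thesis by eventually_elim (rule le_less_trans)
qed

end

theorem proposition9:
  fixes M :: "'a measure" and F :: "real \<Rightarrow> 'a measure"
    and \<pi> :: "real \<Rightarrow> 'a \<Rightarrow> real" and lam :: real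
  assumes "prob_space M"
    and "usual_conditions M F"
    and "pricing_kernel M F \<pi>"
    and "lam > 0"
    and "asymptotically_tail_pareto M \<pi> lam"
    and "t \<ge> 0"
  shows "(\<exists>L. is_ess_liminf M (F t) {t<..} (\<lambda>T \<omega>. ereal (T powr lam * bond_price M F \<pi> t T \<omega>)) L) \<and>
         (\<forall>L. is_ess_liminf M (F t) {t<..} (\<lambda>T \<omega>. ereal (T powr lam * bond_price M F \<pi> t T \<omega>)) L
              \<longrightarrow> (AE \<omega> in M. 0 < L \<omega> \<and> L \<omega> < \<infinity>))"
proof (intro conjI allI impI)
  interpret bond_market M F \<pi>
    using assms(1-3) by (simp add: bond_market_def bond_market_axioms_def usual_conditions_def)
  interpret Ft: finite_measure_subalgebra M "F t"
    using assms(6) by (rule finite_measure_subalgebra_F)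
  show "\<exists>L. is_ess_liminf M (F t) {t<..} (\<lambda>T \<omega>. ereal (T powr lam * bond_price M F \<pi> t T \<omega>)) L"
    using bond_price_measurable[OF assms(6)]
    by (intro ess_liminf_exists[OF finite_measure_axioms Ft.subalg]) simp
  fix L
  assume L: "is_ess_liminf M (F t) {t<..} (\<lambda>T \<omega>. ereal (T powr lam * bond_price M F \<pi> t T \<omega>)) L"
  have "AE \<omega> in M. 0 < L \<omega>"
    using assms(5) unfolding asymptotically_tail_pareto_def
    by (intro ess_liminf_scaled_bond_price_pos[OF _ assms(6) L]) simp
  moreover have "AE \<omega> in M. L \<omega> < \<infinity>"
    using assms(5) unfolding asymptotically_tail_pareto_def
    by (intro ess_liminf_scaled_bond_price_finite[OF _ assms(6) L]) simp
  ultimately show "AE \<omega> in M. 0 < L \<omega> \<and> L \<omega> < \<infinity>" by eventually_elim simp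
qed

end
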